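(* Assume $\alpha=2$ and the far-destination approximation (every relay–destination distance equals $d$), and condition on there being exactly $N\ge1$ relays, i.i.d. uniform in the disc $\mathcal D$ of radius $R_{\mathcal D}$ centred at the source. With distributed beamforming by the set $\tilde{\mathcal S}=\{i: x_i>\epsilon\}$ of relays that decode, the destination SNR is $$SNR_{\tilde{\mathcal S}}=Px_0+\eta\sum_{i\in\tilde{\mathcal S}} y_i\,(Px_i-\tau),$$ and the outage probability is $\mathcal{P}_N(P)=\mathcal{P}\big(SNR_{\tilde{\mathcal S}}<\tau\big)$. Then distributed beamforming achieves the maximum diversity gain $N+1$: $-\lim_{P\to\infty}\frac{\log\mathcal{P}_N(P)}{\log P}=N+1$.
   Context: Source at origin, destination at distance $d>0$. For relay $i$ with source distance $d_i$: $x_i=|h_i|^2/(1+d_i^2)$, $y_i=|g_i|^2/(1+d^2)$; $x_0=|h_d|^2/(1+d^2)$; all fading coefficients $h_d,h_i,g_i$ are independent $\mathcal{CN}(0,1)$ and independent of locations. Transmit power $P>0$, target rate $R>0$, $\tau=2^{2R}-1$, $\epsilon=\tau/P$, energy harvesting efficiency $\eta\in(0,1]$ (relay $i$, if $x_i>\epsilon$, has harvested power $\eta(Px_i-\tau)$). Outage means $\tfrac12\log_2(1+SNR_{\tilde{\mathcal S}})<R$. *)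

theory Defs
  imports "HOL-Probability.Probability"
begin

definition CN01 :: "complex measure" where
  "CN01 = density lborel (\<lambda>z. ennreal (exp (- (cmod z)\<^sup>2) / pi))"

text \<open>Uniform distribution on the disc of radius RD centred at the source (origin).\<close>
definition uniform_disc :: "real \<Rightarrow> complex measure" where
  "uniform_disc RD = uniform_measure lborel (cball 0 RD)"

text \<open>Per-relay randomness: (position p_i, fading h_i, fading g_i); all independent.\<close>
definition relay_measure :: "real \<Rightarrow> (complex \<times> complex \<times> complex) measure" where
  "relay_measure RD = uniform_disc RD \<Otimes>\<^sub>M (CN01 \<Otimes>\<^sub>M CN01)"

text \<open>Full sample space given exactly N relays: (h_d, (relay data)_{i<N}), i.i.d. relays.\<close>
definition system_measure :: "nat \<Rightarrow> real \<Rightarrow>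
    (complex \<times> (nat \<Rightarrow> complex \<times> complex \<times> complex)) measure" where
  "system_measure N RD = CN01 \<Otimes>\<^sub>M (\<Pi>\<^sub>M i\<in>{..<N}. relay_measure RD)"

text \<open>Channel gains with path-loss exponent alpha = 2 and far-destination approximation.\<close>
definition xgain :: "complex \<times> complex \<times> complex \<Rightarrow> real" where
  "xgain r = (cmod (fst (snd r)))\<^sup>2 / (1 + (cmod (fst r))\<^sup>2)"

definition ygain :: "real \<Rightarrow> complex \<times> complex \<times> complex \<Rightarrow> real" where
  "ygain d r = (cmod (snd (snd r)))\<^sup>2 / (1 + d\<^sup>2)"

definition x0gain :: "real \<Rightarrow> complex \<Rightarrow> real" where
  "x0gain d h0 = (cmod h0)\<^sup>2 / (1 + d\<^sup>2)"

text \<open>Destination SNR under distributed beamforming by the decoding set {i. x_i > eps}, eps = tau/P.\<close>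
definition SNR_DBF :: "nat \<Rightarrow> real \<Rightarrow> real \<Rightarrow> real \<Rightarrow> real \<Rightarrow>
    complex \<times> (nat \<Rightarrow> complex \<times> complex \<times> complex) \<Rightarrow> real" where
  "SNR_DBF N d \<eta> \<tau> P \<omega> =
     P * x0gain d (fst \<omega>)
     + \<eta> * (\<Sum>i\<in>{i. i < N \<and> xgain (snd \<omega> i) > \<tau> / P}.
              ygain d (snd \<omega> i) * (P * xgain (snd \<omega> i) - \<tau>))"

definition outage_prob :: "nat \<Rightarrow> real \<Rightarrow> real \<Rightarrow> real \<Rightarrow> real \<Rightarrow> real \<Rightarrow> real" where
  "outage_prob N RD d \<eta> R P =
     (let \<tau> = 2 powr (2 * R) - 1 in
      measure (system_measure N RD)
        {\<omega> \<in> space (system_measure N RD). SNR_DBF N d \<eta> \<tau> P \<omega> < \<tau>})"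

end

theory Submission
  imports Defs
begin

text \<open>
  Outage forces the direct link to be weak, \<open>|h\<^sub>d|\<^sup>2 < \<tau>(1 + d\<^sup>2)/P\<close>, an event of
  probability of order \<open>1/P\<close>, and it forces every relay to be useless. A relay in the disc
  whose source link is not too weak decodes and contributes, so for it outage requires
  \<open>|h\<^sub>i|\<^sup>2 |g\<^sub>i|\<^sup>2 < u\<close> with \<open>u\<close> of order \<open>1/P\<close>. This hyperbolic region is covered by the two
  strips \<open>|h\<^sub>i|\<^sup>2 < u\<close>, \<open>|g\<^sub>i|\<^sup>2 < u\<close> and \<open>k\<close> rectangles of area \<open>u\<^bsup>1-1/k\<^esup>\<close>, so by independence
  the outage probability is \<open>O(P\<^bsup>-(1+N(1-1/k))\<^esup>)\<close> for every \<open>k\<close>. Conversely, when all links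
  are weak of order \<open>1/P\<close> no relay decodes and the direct link fails, which happens with
  probability of order \<open>P\<^bsup>-(N+1)\<^esup>\<close>.
\<close>

section \<open>The standard complex Gaussian\<close>

lemma nn_integral_CN01_density: "(\<integral>\<^sup>+z. ennreal (exp (- (cmod z)\<^sup>2) / pi) \<partial>lborel) = 1"
proof -
  define g :: "complex \<Rightarrow> real \<Rightarrow> ennreal" where "g b x = ennreal (exp (- x\<^sup>2) / sqrt pi)" for b x
  have gauss: "(\<integral>\<^sup>+x. g b x \<partial>lborel) = 1" for b
  proof -
    have "normal_density 0 (1 / sqrt 2) x = exp (- x\<^sup>2) / sqrt pi" for x
      by (simp add: normal_density_def power_divide)
    moreover have "(\<integral>\<^sup>+x. ennreal (normal_density 0 (1 / sqrt 2) x) \<partial>lborel) = ennreal 1"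
      by (subst nn_integral_eq_integral) auto
    ultimately show ?thesis by (simp add: g_def)
  qed
  have "ennreal (exp (- (cmod z)\<^sup>2) / pi) = (\<Prod>b\<in>Basis. g b (z \<bullet> b))" for z :: complex
  proof -
    have "exp (- (cmod z)\<^sup>2) = exp (- (Re z)\<^sup>2) * exp (- (Im z)\<^sup>2)"
      by (simp add: cmod_power2 flip: exp_add)
    then have "exp (- (cmod z)\<^sup>2) / pi = exp (- (Re z)\<^sup>2) / sqrt pi * (exp (- (Im z)\<^sup>2) / sqrt pi)"
      by simp
    then show ?thesis
      by (simp add: g_def Basis_complex_def inner_complex_def ennreal_mult[symmetric])
  qed
  then have "(\<integral>\<^sup>+z. ennreal (exp (- (cmod z)\<^sup>2) / pi) \<partial>lborel) = (\<integral>\<^sup>+z. (\<Prod>b\<in>Basis. g b (z \<bullet> b)) \<partial>lborel)"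
    by simp
  also have "\<dots> = (\<Prod>b\<in>(Basis::complex set). (\<integral>\<^sup>+x. g b x \<partial>lborel))"
    by (rule nn_integral_lborel_prod) (auto simp: g_def)
  finally show ?thesis by (simp add: gauss)
qed

lemma prob_space_CN01: "prob_space CN01"
  by (rule prob_spaceI) (simp add: CN01_def emeasure_density nn_integral_CN01_density)

lemma sets_CN01 [simp]: "sets CN01 = sets borel"
  by (simp add: CN01_def)

lemma space_CN01 [simp]: "space CN01 = UNIV"
  by (simp add: CN01_def)

lemma measure_CN01_UNIV [simp]: "measure CN01 UNIV = 1"
  using prob_space.prob_space[OF prob_space_CN01] by simp

lemma emeasure_CN01:
  "A \<in> sets borel \<Longrightarrow>
    emeasure CN01 A = (\<integral>\<^sup>+z. ennreal (exp (- (cmod z)\<^sup>2) / pi) * indicator A z \<partial>lborel)"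
  unfolding CN01_def by (rule emeasure_density) auto

lemma measure_CN01_ball_le:
  assumes "r \<ge> 0" shows "measure CN01 (ball 0 r) \<le> r\<^sup>2"
proof -
  interpret prob_space CN01 by (rule prob_space_CN01)
  have "emeasure CN01 (ball 0 r) \<le> (\<integral>\<^sup>+z. ennreal (1 / pi) * indicator (ball (0::complex) r) z \<partial>lborel)"
    unfolding emeasure_CN01[OF borel_open[OF open_ball]]
    by (intro nn_integral_mono) (auto split: split_indicator intro!: ennreal_leI divide_right_mono)
  also have "\<dots> = ennreal (r\<^sup>2)"
    using assms by (simp add: nn_integral_cmult_indicator emeasure_ball unit_ball_vol_2 ennreal_mult[symmetric])
  finally show ?thesis using assms by (simp add: emeasure_eq_measure)
qed

lemma measure_CN01_ball_ge:
  assumes "r \<ge> 0" shows "exp (- r\<^sup>2) * r\<^sup>2 \<le> measure CN01 (ball 0 r)"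
proof -
  interpret prob_space CN01 by (rule prob_space_CN01)
  have "exp (- r\<^sup>2) / pi \<le> exp (- (cmod z)\<^sup>2) / pi" if "z \<in> ball 0 r" for z :: complex
    using that assms by (auto intro!: divide_right_mono power_mono)
  then have "(\<integral>\<^sup>+z. ennreal (exp (- r\<^sup>2) / pi) * indicator (ball (0::complex) r) z \<partial>lborel) \<le> emeasure CN01 (ball 0 r)"
    unfolding emeasure_CN01[OF borel_open[OF open_ball]]
    by (intro nn_integral_mono) (auto split: split_indicator intro!: ennreal_leI)
  moreover have "(\<integral>\<^sup>+z. ennreal (exp (- r\<^sup>2) / pi) * indicator (ball (0::complex) r) z \<partial>lborel) = ennreal (exp (- r\<^sup>2) * r\<^sup>2)"
    using assms by (simp add: nn_integral_cmult_indicator emeasure_ball unit_ball_vol_2 ennreal_mult[symmetric])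
  ultimately show ?thesis using assms by (simp add: emeasure_eq_measure)
qed

definition gain_below :: "real \<Rightarrow> complex set" where
  "gain_below s = {h. (cmod h)\<^sup>2 < s}"

lemma mem_gain_below [simp]: "h \<in> gain_below s \<longleftrightarrow> (cmod h)\<^sup>2 < s"
  by (simp add: gain_below_def)

lemma gain_below_eq_ball: "s \<ge> 0 \<Longrightarrow> gain_below s = ball 0 (sqrt s)"
  by (auto simp: set_eq_iff)
    (metis dist_0_norm mem_ball norm_ge_zero real_sqrt_abs real_sqrt_less_iff abs_of_nonneg)+

lemma gain_below_borel [measurable]: "gain_below s \<in> sets borel"
  unfolding gain_below_def by measurable

lemma measure_CN01_gain_below:
  assumes "s \<ge> 0"
  shows "exp (- s) * s \<le> measure CN01 (gain_below s)" and "measure CN01 (gain_below s) \<le> s"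
  using measure_CN01_ball_ge[of "sqrt s"] measure_CN01_ball_le[of "sqrt s"] assms
  by (simp_all add: gain_below_eq_ball)

section \<open>Product structure of the model\<close>

lemma measure_pair_measure_Times_prob:
  assumes "prob_space M1" "prob_space M2" "A \<in> sets M1" "B \<in> sets M2"
  shows "measure (M1 \<Otimes>\<^sub>M M2) (A \<times> B) = measure M1 A * measure M2 B"
proof -
  interpret M1: prob_space M1 by fact
  interpret M2: prob_space M2 by fact
  interpret pair_prob_space M1 M2 ..
  have "emeasure (M1 \<Otimes>\<^sub>M M2) (A \<times> B) = emeasure M1 A * emeasure M2 B"
    using assms by (simp add: M2.emeasure_pair_measure_Times)
  then show ?thesis
    by (simp add: M1.emeasure_eq_measure M2.emeasure_eq_measure P.emeasure_eq_measure ennreal_mult[symmetric])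
qed

lemma measure_PiM_PiE_const:
  assumes "prob_space M" "B \<in> sets M" "finite I"
  shows "measure (\<Pi>\<^sub>M i\<in>I. M) (\<Pi>\<^sub>E i\<in>I. B) = measure M B ^ card I"
proof -
  interpret finite_product_prob_space "\<lambda>_. M" I
    by (intro finite_product_prob_space.intro finite_product_sigma_finite.intro
        finite_product_sigma_finite_axioms.intro product_prob_spaceI
        product_prob_space.axioms(1)) (use assms in auto)
  show ?thesis using prob_times[of "\<lambda>_. B"] assms by simp
qed

lemma prob_space_uniform_disc: "RD > 0 \<Longrightarrow> prob_space (uniform_disc RD)"
  unfolding uniform_disc_def
  by (rule prob_space_uniform_measure) (simp_all add: emeasure_cball unit_ball_vol_2)

lemma sets_uniform_disc [simp]: "sets (uniform_disc RD) = sets borel"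
  by (simp add: uniform_disc_def)

lemma measure_uniform_disc_UNIV: "RD > 0 \<Longrightarrow> measure (uniform_disc RD) UNIV = 1"
  using prob_space.prob_space[OF prob_space_uniform_disc] by (simp add: uniform_disc_def)

lemma measure_uniform_disc_outside: "RD > 0 \<Longrightarrow> measure (uniform_disc RD) (- cball 0 RD) = 0"
  unfolding uniform_disc_def
  by (subst measure_uniform_measure) (simp_all add: emeasure_cball unit_ball_vol_2)

lemma prob_space_relay_measure: "RD > 0 \<Longrightarrow> prob_space (relay_measure RD)"
  unfolding relay_measure_def
  by (intro prob_space_pair prob_space_uniform_disc prob_space_CN01)

lemma prob_space_system_measure: "RD > 0 \<Longrightarrow> prob_space (system_measure N RD)"
  unfolding system_measure_def
  by (intro prob_space_pair prob_space_PiM prob_space_relay_measure prob_space_CN01)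

lemma sets_relay_measure: "sets (relay_measure RD) = sets (borel \<Otimes>\<^sub>M borel \<Otimes>\<^sub>M borel)"
  unfolding relay_measure_def by (intro sets_pair_measure_cong) (simp_all add: CN01_def)

lemma sets_system_measure:
  "sets (system_measure N RD) = sets (borel \<Otimes>\<^sub>M (\<Pi>\<^sub>M i\<in>{..<N}. borel \<Otimes>\<^sub>M borel \<Otimes>\<^sub>M borel))"
  unfolding system_measure_def
  by (intro sets_pair_measure_cong sets_PiM_cong) (simp_all add: sets_relay_measure)

lemma space_system_measure: "space (system_measure N RD) = UNIV \<times> (\<Pi>\<^sub>E i\<in>{..<N}. UNIV)"
  by (simp add: system_measure_def relay_measure_def uniform_disc_def space_pair_measure space_PiM)

lemma measure_CN01_pair_Times:
  "A \<in> sets borel \<Longrightarrow> B \<in> sets borel \<Longrightarrow> measure (CN01 \<Otimes>\<^sub>M CN01) (A \<times> B) = measure CN01 A * measure CN01 B"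
  by (simp add: measure_pair_measure_Times_prob prob_space_CN01)

lemma measure_relay_measure_Times:
  assumes "RD > 0" "A \<in> sets borel" "W \<in> sets (borel \<Otimes>\<^sub>M borel)"
  shows "measure (relay_measure RD) (A \<times> W) = measure (uniform_disc RD) A * measure (CN01 \<Otimes>\<^sub>M CN01) W"
proof -
  have "sets (CN01 \<Otimes>\<^sub>M CN01) = sets (borel \<Otimes>\<^sub>M borel)"
    by (intro sets_pair_measure_cong) simp_all
  then show ?thesis
    using assms unfolding relay_measure_def
    by (simp add: measure_pair_measure_Times_prob prob_space_uniform_disc prob_space_pair prob_space_CN01)
qed

lemma measure_system_measure_Times:
  assumes "RD > 0" "A \<in> sets borel" "B \<in> sets (relay_measure RD)"
  shows "measure (system_measure N RD) (A \<times> (\<Pi>\<^sub>E i\<in>{..<N}. B)) = measure CN01 A * measure (relay_measure RD) B ^ N"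
  using assms unfolding system_measure_def
  by (simp add: measure_pair_measure_Times_prob measure_PiM_PiE_const prob_space_CN01 prob_space_PiM
      prob_space_relay_measure sets_PiM_I_finite)

section \<open>Covering the hyperbolic region\<close>

lemma hyperbola_below_rectangles:
  fixes u a b :: real and k :: nat
  assumes u: "0 < u" "u \<le> 1" and k: "k \<ge> 1" and ab: "a \<ge> 0" "b \<ge> 0" "a * b < u"
  shows "a < u \<or> b < u \<or> (\<exists>j<k. a < u powr (j / k) \<and> b < u powr (1 - Suc j / k))"
proof (cases "a < u \<or> b < u")
  case False
  then have au: "u \<le> a" and bu: "u \<le> b" by simp_all
  have "a * u \<le> a * b" using bu ab(1) by (rule mult_left_mono)
  then have "a * u < 1 * u" using ab(3) by simp
  then have "a < 1" by (rule mult_right_less_imp_less) (use u in simp)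
  define P where "P j \<longleftrightarrow> u powr (j / k) \<le> a" for j :: nat
  have "P k" using au u k by (simp add: P_def)
  moreover have "\<not> P 0" using \<open>a < 1\<close> u by (simp add: P_def)
  ultimately obtain j where j: "j < k" "\<not> P j" "P (Suc j)"
    using ex_least_nat_less[of P k] by auto
  have "b < u / a" using ab au u by (simp add: less_divide_eq mult.commute)
  also have "\<dots> \<le> u / u powr (Suc j / k)"
    using j(3) u au by (intro divide_left_mono) (auto simp: P_def intro!: mult_pos_pos)
  also have "\<dots> = u powr (1 - Suc j / k)"
    using u by (simp add: powr_diff)
  finally show ?thesis
    using j by (auto simp: P_def)
qed auto

text \<open>
  The region \<open>|h|\<^sup>2 |g|\<^sup>2 < u\<close> itself has probability of order \<open>u ln(1/u)\<close>; covering it by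
  rectangles avoids computing this and loses only a factor \<open>u\<^bsup>-1/k\<^esup>\<close>, for arbitrary \<open>k\<close>.
\<close>

definition weak_link_cover :: "real \<Rightarrow> real \<Rightarrow> nat \<Rightarrow> (complex \<times> complex) set" where
  "weak_link_cover s u k =
     gain_below s \<times> UNIV \<union> gain_below u \<times> UNIV \<union> UNIV \<times> gain_below u \<union>
     (\<Union>j<k. gain_below (u powr (j / k)) \<times> gain_below (u powr (1 - Suc j / k)))"

lemma weak_link_cover_borel [measurable]: "weak_link_cover s u k \<in> sets (borel \<Otimes>\<^sub>M borel)"
  unfolding weak_link_cover_def by measurable

lemma mem_weak_link_cover:
  assumes "0 < u" "u \<le> 1" "k \<ge> 1" and weak: "(cmod h)\<^sup>2 < s \<or> (cmod h)\<^sup>2 * (cmod g)\<^sup>2 < u"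
  shows "(h, g) \<in> weak_link_cover s u k"
  using weak hyperbola_below_rectangles[OF assms(1-3), of "(cmod h)\<^sup>2" "(cmod g)\<^sup>2"]
  unfolding weak_link_cover_def by auto

lemma measure_weak_link_cover:
  assumes u: "0 < u" "u \<le> 1" and "k \<ge> 1" "s \<ge> 0"
  shows "measure (CN01 \<Otimes>\<^sub>M CN01) (weak_link_cover s u k) \<le> s + 2 * u + k * u powr (1 - 1 / k)"
proof -
  let ?\<mu> = "measure (CN01 \<Otimes>\<^sub>M CN01)"
  have "?\<mu> (gain_below (u powr (j / k)) \<times> gain_below (u powr (1 - Suc j / k))) \<le> u powr (j / k) * u powr (1 - Suc j / k)" for j
    unfolding measure_CN01_pair_Times[OF gain_below_borel gain_below_borel]
    by (intro mult_mono measure_CN01_gain_below) auto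
  also have "u powr (j / k) * u powr (1 - Suc j / k) = u powr (1 - 1 / k)" for j
    using u by (simp add: powr_add[symmetric] add_divide_distrib diff_divide_distrib)
  finally have rect: "?\<mu> (gain_below (u powr (j / k)) \<times> gain_below (u powr (1 - Suc j / k))) \<le> u powr (1 - 1 / k)" for j .
  have "?\<mu> (weak_link_cover s u k) \<le> ?\<mu> (gain_below s \<times> UNIV) + ?\<mu> (gain_below u \<times> UNIV) + ?\<mu> (UNIV \<times> gain_below u) +
      (\<Sum>j<k. ?\<mu> (gain_below (u powr (j / k)) \<times> gain_below (u powr (1 - Suc j / k))))"
    unfolding weak_link_cover_def
    by (intro order_trans[OF measure_Un_le] add_mono measure_UNION_le order_refl) auto
  also have "\<dots> \<le> s + u + u + (\<Sum>j<k. u powr (1 - 1 / k))"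
    using assms by (intro add_mono sum_mono rect) (simp_all add: measure_CN01_pair_Times measure_CN01_gain_below)
  finally show ?thesis by simp
qed

section \<open>Bounds on the outage probability\<close>

definition outage_event :: "nat \<Rightarrow> real \<Rightarrow> real \<Rightarrow> real \<Rightarrow> real \<Rightarrow> real \<Rightarrow>
    (complex \<times> (nat \<Rightarrow> complex \<times> complex \<times> complex)) set" where
  "outage_event N RD d \<eta> \<tau> P = {\<omega> \<in> space (system_measure N RD). SNR_DBF N d \<eta> \<tau> P \<omega> < \<tau>}"

lemma outage_prob_eq_measure_outage_event:
  "outage_prob N RD d \<eta> R P = measure (system_measure N RD) (outage_event N RD d \<eta> (2 powr (2 * R) - 1) P)"
  by (simp add: outage_prob_def outage_event_def Let_def)

lemma SNR_DBF_eq_sum_lessThan: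
  "SNR_DBF N d \<eta> \<tau> P \<omega> = P * x0gain d (fst \<omega>)
     + \<eta> * (\<Sum>i<N. if \<tau> / P < xgain (snd \<omega> i) then ygain d (snd \<omega> i) * (P * xgain (snd \<omega> i) - \<tau>) else 0)"
proof -
  have "{i. i < N \<and> \<tau> / P < xgain (snd \<omega> i)} = {i\<in>{..<N}. \<tau> / P < xgain (snd \<omega> i)}"
    by auto
  then show ?thesis
    unfolding SNR_DBF_def by (simp only: sum.inter_filter finite_lessThan)
qed

lemma outage_event_sets [measurable]: "outage_event N RD d \<eta> \<tau> P \<in> sets (system_measure N RD)"
proof -
  have "SNR_DBF N d \<eta> \<tau> P \<in> borel_measurable (borel \<Otimes>\<^sub>M (\<Pi>\<^sub>M i\<in>{..<N}. borel \<Otimes>\<^sub>M borel \<Otimes>\<^sub>M borel))"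
    unfolding SNR_DBF_eq_sum_lessThan[abs_def] xgain_def ygain_def x0gain_def by measurable
  then have "SNR_DBF N d \<eta> \<tau> P \<in> borel_measurable (system_measure N RD)"
    by (subst measurable_cong_sets[OF sets_system_measure refl])
  then show ?thesis
    unfolding outage_event_def by measurable
qed

lemma outage_event_links_short:
  assumes \<omega>: "\<omega> \<in> outage_event N RD d \<eta> \<tau> P" and "P > 0" "\<eta> > 0"
  shows "P * x0gain d (fst \<omega>) < \<tau>"
    and "i < N \<Longrightarrow> \<tau> / P < xgain (snd \<omega> i) \<Longrightarrow> \<eta> * (ygain d (snd \<omega> i) * (P * xgain (snd \<omega> i) - \<tau>)) < \<tau>"
proof -
  define S where "S = {i. i < N \<and> \<tau> / P < xgain (snd \<omega> i)}"
  define f where "f i = ygain d (snd \<omega> i) * (P * xgain (snd \<omega> i) - \<tau>)" for i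
  have f_nonneg: "f i \<ge> 0" if "i \<in> S" for i
    using that \<open>P > 0\<close> by (simp add: S_def f_def ygain_def pos_divide_less_eq mult.commute)
  have snr: "P * x0gain d (fst \<omega>) + \<eta> * sum f S < \<tau>"
    using \<omega> by (simp add: outage_event_def SNR_DBF_def S_def f_def)
  have direct_nonneg: "0 \<le> P * x0gain d (fst \<omega>)"
    using \<open>P > 0\<close> by (simp add: x0gain_def)
  have relays_nonneg: "0 \<le> \<eta> * sum f S"
    using \<open>\<eta> > 0\<close> f_nonneg by (simp add: sum_nonneg)
  show "P * x0gain d (fst \<omega>) < \<tau>"
    using snr relays_nonneg by linarith
  assume "i < N" "\<tau> / P < xgain (snd \<omega> i)"
  then have "i \<in> S" by (simp add: S_def)
  then have "\<eta> * f i \<le> \<eta> * sum f S"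
    using \<open>\<eta> > 0\<close> f_nonneg by (intro mult_left_mono member_le_sum) (auto simp: S_def)
  then show "\<eta> * (ygain d (snd \<omega> i) * (P * xgain (snd \<omega> i) - \<tau>)) < \<tau>"
    using snr direct_nonneg by (simp add: f_def)
qed

lemma outage_event_if_links_short:
  assumes "\<omega> \<in> space (system_measure N RD)" "P * x0gain d (fst \<omega>) < \<tau>" "\<forall>i<N. xgain (snd \<omega> i) \<le> \<tau> / P"
  shows "\<omega> \<in> outage_event N RD d \<eta> \<tau> P"
proof -
  have no_relay: "{i. i < N \<and> \<tau> / P < xgain (snd \<omega> i)} = {}"
    using assms(3) by force
  have "SNR_DBF N d \<eta> \<tau> P \<omega> = P * x0gain d (fst \<omega>)"
    unfolding SNR_DBF_def no_relay by simp
  then show ?thesis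
    using assms(1,2) by (simp add: outage_event_def)
qed

lemma weak_links_of_short_relay:
  assumes P: "P > 0" and \<tau>: "\<tau> > 0" and \<eta>: "\<eta> > 0" and p: "cmod p \<le> RD"
    and short: "\<tau> / P < xgain (p, h, g) \<Longrightarrow> \<eta> * (ygain d (p, h, g) * (P * xgain (p, h, g) - \<tau>)) < \<tau>"
  shows "(cmod h)\<^sup>2 < 2 * (1 + RD\<^sup>2) * \<tau> / P \<or> (cmod h)\<^sup>2 * (cmod g)\<^sup>2 < 2 * (1 + RD\<^sup>2) * (1 + d\<^sup>2) * \<tau> / (\<eta> * P)"
proof (cases "(cmod h)\<^sup>2 < 2 * (1 + RD\<^sup>2) * \<tau> / P")
  case False
  define K where "K = 1 + RD\<^sup>2"
  define D where "D = 1 + d\<^sup>2"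
  have K: "K > 0" "1 + (cmod p)\<^sup>2 \<le> K"
    using p by (auto simp: K_def intro: add_pos_nonneg power_mono)
  have D: "D > 0" by (simp add: D_def add_pos_nonneg)
  from False have strong: "2 * \<tau> \<le> P * (cmod h)\<^sup>2 / K"
    using K P by (simp add: K_def field_simps)
  have "(cmod h)\<^sup>2 / K \<le> xgain (p, h, g)"
    unfolding xgain_def fst_conv snd_conv
    by (rule divide_left_mono) (use K in \<open>auto intro!: mult_pos_pos add_pos_nonneg\<close>)
  then have "P * ((cmod h)\<^sup>2 / K) \<le> P * xgain (p, h, g)"
    by (rule mult_left_mono) (use P in simp)
  then have excess: "P * (cmod h)\<^sup>2 / (2 * K) \<le> P * xgain (p, h, g) - \<tau>"
    using strong by simp
  then have "\<tau> / P < xgain (p, h, g)"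
    using strong \<tau> P by (simp add: field_simps)
  then have "\<eta> * ((cmod g)\<^sup>2 / D * (P * xgain (p, h, g) - \<tau>)) < \<tau>"
    using short by (simp add: ygain_def D_def)
  moreover have "\<eta> * ((cmod g)\<^sup>2 / D * (P * (cmod h)\<^sup>2 / (2 * K))) \<le> \<eta> * ((cmod g)\<^sup>2 / D * (P * xgain (p, h, g) - \<tau>))"
    using excess \<eta> D by (intro mult_left_mono) auto
  ultimately have "\<eta> * ((cmod g)\<^sup>2 / D * (P * (cmod h)\<^sup>2 / (2 * K))) < \<tau>"
    by linarith
  then have "(cmod h)\<^sup>2 * (cmod g)\<^sup>2 * (\<eta> * P) < 2 * K * D * \<tau>"
    using K D by (simp add: field_simps)
  then have "(cmod h)\<^sup>2 * (cmod g)\<^sup>2 < 2 * K * D * \<tau> / (\<eta> * P)"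
    using \<eta> P by (simp add: field_simps)
  then show ?thesis
    by (simp add: K_def D_def)
qed simp

lemma xgain_le_norm_sq: "xgain (p, h, g) \<le> (cmod h)\<^sup>2"
  using divide_left_mono[of 1 "1 + (cmod p)\<^sup>2" "(cmod h)\<^sup>2"] by (simp add: xgain_def add_pos_nonneg)

lemma weak_links_subset_outage_event:
  assumes "P > 0"
  shows "gain_below (\<tau> * (1 + d\<^sup>2) / P) \<times> (\<Pi>\<^sub>E i\<in>{..<N}. UNIV \<times> gain_below (\<tau> / P) \<times> UNIV)
    \<subseteq> outage_event N RD d \<eta> \<tau> P" (is "?weak \<subseteq> _")
proof
  fix \<omega> assume \<omega>: "\<omega> \<in> ?weak"
  then have relays: "snd \<omega> \<in> (\<Pi>\<^sub>E i\<in>{..<N}. UNIV \<times> gain_below (\<tau> / P) \<times> UNIV)"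
    by (simp add: mem_Times_iff)
  have "\<omega> \<in> space (system_measure N RD)"
    using relays by (auto simp: space_system_measure mem_Times_iff PiE_iff)
  moreover have "P * x0gain d (fst \<omega>) < \<tau>"
    using \<omega> \<open>P > 0\<close> by (simp add: mem_Times_iff x0gain_def field_simps add_pos_nonneg)
  moreover have "xgain (snd \<omega> i) \<le> \<tau> / P" if "i < N" for i
  proof -
    obtain p h g where i: "snd \<omega> i = (p, h, g)"
      by (metis prod_cases3)
    have "snd \<omega> i \<in> UNIV \<times> gain_below (\<tau> / P) \<times> UNIV"
      using relays that by (simp add: PiE_iff)
    then have "(cmod h)\<^sup>2 < \<tau> / P"
      using i by simp
    then show ?thesis
      using xgain_le_norm_sq[of p h g] i by simp
  qed
  ultimately show "\<omega> \<in> outage_event N RD d \<eta> \<tau> P"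
    by (intro outage_event_if_links_short) auto
qed

lemma measure_outage_event_ge:
  assumes RD: "RD > 0" and \<tau>: "\<tau> > 0" and P: "\<tau> * (1 + d\<^sup>2) \<le> P"
  shows "exp (- 1) * (\<tau> * (1 + d\<^sup>2) / P) * (exp (- 1) * (\<tau> / P)) ^ N
    \<le> measure (system_measure N RD) (outage_event N RD d \<eta> \<tau> P)"
proof -
  interpret prob_space "system_measure N RD"
    using prob_space_system_measure[OF RD] .
  define s0 where "s0 = \<tau> * (1 + d\<^sup>2) / P"
  define s1 where "s1 = \<tau> / P"
  have "0 < \<tau> * (1 + d\<^sup>2)"
    using \<tau> by (simp add: add_pos_nonneg)
  then have "P > 0"
    using P by linarith
  then have s0: "0 \<le> s0" "s0 \<le> 1" and s1: "0 \<le> s1" "s1 \<le> 1"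
    using \<tau> P by (auto simp: s0_def s1_def field_simps intro: order_trans[OF _ P])
  have gain_below_ge: "exp (- 1) * s \<le> measure CN01 (gain_below s)" if "0 \<le> s" "s \<le> 1" for s
  proof -
    have "exp (- 1) * s \<le> exp (- s) * s"
      using that by (intro mult_right_mono) auto
    then show ?thesis
      using measure_CN01_gain_below(1)[OF \<open>0 \<le> s\<close>] by linarith
  qed
  have "exp (- 1) * s0 * (exp (- 1) * s1) ^ N \<le> measure CN01 (gain_below s0) * measure CN01 (gain_below s1) ^ N"
    using s0 s1 by (intro mult_mono power_mono gain_below_ge) auto
  also have "\<dots> = measure (system_measure N RD) (gain_below s0 \<times> (\<Pi>\<^sub>E i\<in>{..<N}. UNIV \<times> gain_below s1 \<times> UNIV))"
    using RD by (simp add: measure_system_measure_Times measure_relay_measure_Times sets_relay_measure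
        measure_CN01_pair_Times measure_uniform_disc_UNIV)
  also have "\<dots> \<le> measure (system_measure N RD) (outage_event N RD d \<eta> \<tau> P)"
    using weak_links_subset_outage_event[OF \<open>P > 0\<close>] unfolding s0_def s1_def
    by (rule finite_measure_mono) (rule outage_event_sets)
  finally show ?thesis
    unfolding s0_def s1_def .
qed

definition weak_relay_cover :: "real \<Rightarrow> real \<Rightarrow> real \<Rightarrow> nat \<Rightarrow> (complex \<times> complex \<times> complex) set" where
  "weak_relay_cover RD s u k = (- cball 0 RD) \<times> UNIV \<union> UNIV \<times> weak_link_cover s u k"

lemma weak_relay_cover_sets: "weak_relay_cover RD s u k \<in> sets (relay_measure RD)"
proof -
  have "(UNIV :: (complex \<times> complex) set) \<in> sets (borel \<Otimes>\<^sub>M borel)"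
    using pair_measureI[of UNIV borel UNIV borel] by simp
  then show ?thesis
    unfolding weak_relay_cover_def sets_relay_measure
    by (intro sets.Un pair_measureI borel_comp borel_closed weak_link_cover_borel) auto
qed

lemma measure_weak_relay_cover:
  assumes RD: "RD > 0" and "0 < u" "u \<le> 1" "k \<ge> 1" "s \<ge> 0"
  shows "measure (relay_measure RD) (weak_relay_cover RD s u k) \<le> s + 2 * u + k * u powr (1 - 1 / k)"
proof -
  have univ: "(UNIV :: (complex \<times> complex) set) \<in> sets (borel \<Otimes>\<^sub>M borel)"
    using pair_measureI[of UNIV borel UNIV borel] by simp
  have outside: "- cball 0 RD \<in> sets borel"
    by (intro borel_comp borel_closed) simp
  have "measure (relay_measure RD) (weak_relay_cover RD s u k)
      \<le> measure (relay_measure RD) ((- cball 0 RD) \<times> UNIV) + measure (relay_measure RD) (UNIV \<times> weak_link_cover s u k)"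
    unfolding weak_relay_cover_def
    by (rule measure_Un_le) (use univ outside in \<open>simp_all add: sets_relay_measure pair_measureI\<close>)
  also have "\<dots> = measure (CN01 \<Otimes>\<^sub>M CN01) (weak_link_cover s u k)"
    using measure_relay_measure_Times[OF RD outside univ] RD
    by (simp add: measure_relay_measure_Times measure_uniform_disc_outside measure_uniform_disc_UNIV)
  also have "\<dots> \<le> s + 2 * u + k * u powr (1 - 1 / k)"
    using measure_weak_link_cover assms(2-5) by blast
  finally show ?thesis .
qed

lemma outage_event_subset_weak_relays:
  fixes N k :: nat and RD d \<eta> \<tau> P :: real
  defines "u \<equiv> 2 * (1 + RD\<^sup>2) * (1 + d\<^sup>2) * \<tau> / (\<eta> * P)"
  assumes P: "P > 0" and \<tau>: "\<tau> > 0" and \<eta>: "\<eta> > 0" and k: "k \<ge> 1" and u: "u \<le> 1"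
  shows "outage_event N RD d \<eta> \<tau> P
    \<subseteq> gain_below (\<tau> * (1 + d\<^sup>2) / P) \<times> (\<Pi>\<^sub>E i\<in>{..<N}. weak_relay_cover RD (2 * (1 + RD\<^sup>2) * \<tau> / P) u k)"
    (is "_ \<subseteq> ?weak")
proof
  fix \<omega> assume \<omega>: "\<omega> \<in> outage_event N RD d \<eta> \<tau> P"
  have "u > 0"
    using \<tau> \<eta> P by (simp add: u_def add_pos_nonneg)
  have "(cmod (fst \<omega>))\<^sup>2 < \<tau> * (1 + d\<^sup>2) / P"
    using outage_event_links_short(1)[OF \<omega> P \<eta>] P
    by (simp add: x0gain_def field_simps add_pos_nonneg)
  moreover have "snd \<omega> i \<in> weak_relay_cover RD (2 * (1 + RD\<^sup>2) * \<tau> / P) u k" if "i < N" for i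
  proof -
    obtain p h g where i: "snd \<omega> i = (p, h, g)"
      by (metis prod_cases3)
    show ?thesis
    proof (cases "cmod p \<le> RD")
      case True
      have "(cmod h)\<^sup>2 < 2 * (1 + RD\<^sup>2) * \<tau> / P \<or> (cmod h)\<^sup>2 * (cmod g)\<^sup>2 < u"
        using weak_links_of_short_relay[OF P \<tau> \<eta> True] outage_event_links_short(2)[OF \<omega> P \<eta> \<open>i < N\<close>] i
        by (simp add: u_def)
      then show ?thesis
        using mem_weak_link_cover[OF \<open>u > 0\<close> u k] i by (simp add: weak_relay_cover_def)
    qed (simp add: weak_relay_cover_def i)
  qed
  moreover have "\<omega> \<in> space (system_measure N RD)"
    using \<omega> by (simp add: outage_event_def)
  then have "snd \<omega> \<in> extensional {..<N}"
    by (simp add: space_system_measure mem_Times_iff PiE_def)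
  ultimately show "\<omega> \<in> ?weak"
    by (auto simp: mem_Times_iff PiE_iff)
qed

lemma measure_outage_event_le:
  fixes N k :: nat and RD d \<eta> \<tau> P :: real
  defines "u \<equiv> 2 * (1 + RD\<^sup>2) * (1 + d\<^sup>2) * \<tau> / (\<eta> * P)"
  assumes RD: "RD > 0" and \<tau>: "\<tau> > 0" and \<eta>: "\<eta> > 0" and P: "P > 0" and k: "k \<ge> 1" and u: "u \<le> 1"
  shows "measure (system_measure N RD) (outage_event N RD d \<eta> \<tau> P)
    \<le> \<tau> * (1 + d\<^sup>2) / P * (2 * (1 + RD\<^sup>2) * \<tau> / P + 2 * u + k * u powr (1 - 1 / k)) ^ N"
proof -
  interpret prob_space "system_measure N RD"
    using prob_space_system_measure[OF RD] .
  define s0 where "s0 = \<tau> * (1 + d\<^sup>2) / P"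
  define s where "s = 2 * (1 + RD\<^sup>2) * \<tau> / P"
  define B where "B = weak_relay_cover RD s u k"
  have "u > 0" "s \<ge> 0" "s0 \<ge> 0"
    using RD \<tau> \<eta> P by (simp_all add: u_def s_def s0_def add_pos_nonneg)
  have "measure (system_measure N RD) (outage_event N RD d \<eta> \<tau> P)
      \<le> measure (system_measure N RD) (gain_below s0 \<times> (\<Pi>\<^sub>E i\<in>{..<N}. B))"
  proof (rule finite_measure_mono)
    show "outage_event N RD d \<eta> \<tau> P \<subseteq> gain_below s0 \<times> (\<Pi>\<^sub>E i\<in>{..<N}. B)"
      using outage_event_subset_weak_relays[OF P \<tau> \<eta> k u[unfolded u_def]]
      by (simp add: s0_def s_def B_def u_def)
    show "gain_below s0 \<times> (\<Pi>\<^sub>E i\<in>{..<N}. B) \<in> sets (system_measure N RD)"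
      unfolding system_measure_def B_def
      by (intro pair_measureI sets_PiM_I_finite) (simp_all add: weak_relay_cover_sets)
  qed
  also have "\<dots> = measure CN01 (gain_below s0) * measure (relay_measure RD) B ^ N"
    unfolding B_def by (rule measure_system_measure_Times[OF RD gain_below_borel weak_relay_cover_sets])
  also have "\<dots> \<le> s0 * (s + 2 * u + k * u powr (1 - 1 / k)) ^ N"
  proof -
    have "measure (relay_measure RD) B \<le> s + 2 * u + k * u powr (1 - 1 / k)"
      unfolding B_def by (rule measure_weak_relay_cover[OF RD \<open>u > 0\<close> u k \<open>s \<ge> 0\<close>])
    then show ?thesis
      using \<open>s0 \<ge> 0\<close> by (intro mult_mono[OF measure_CN01_gain_below(2)[OF \<open>s0 \<ge> 0\<close>] power_mono]) auto
  qed
  finally show ?thesis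
    by (simp add: s0_def s_def)
qed

section \<open>Diversity order\<close>

lemma tendsto_neg_ln_div_ln_at_top:
  fixes f :: "real \<Rightarrow> real" and b c :: real
  assumes "c > 0" and lower: "eventually (\<lambda>P. c * P powr (- b) \<le> f P) at_top"
    and upper: "\<And>a. a < b \<Longrightarrow> \<exists>C. eventually (\<lambda>P. f P \<le> C * P powr (- a)) at_top"
  shows "((\<lambda>P. - (ln (f P) / ln P)) \<longlongrightarrow> b) at_top"
proof -
  have vanishing: "((\<lambda>P. a - K / ln P) \<longlongrightarrow> a) at_top" for a K :: real
    using tendsto_diff[OF tendsto_const tendsto_divide_0[OF tendsto_const filterlim_at_top_imp_at_infinity[OF ln_at_top]]]
    by simp
  have ln_pos: "eventually (\<lambda>P::real. 0 < ln P) at_top"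
    using eventually_gt_at_top[of 1] by eventually_elim simp
  have f_pos: "eventually (\<lambda>P. 0 < f P) at_top"
    using lower eventually_gt_at_top[of 0]
  proof eventually_elim
    case (elim P)
    have "0 < c * P powr (- b)"
      using \<open>c > 0\<close> elim(2) by simp
    then show ?case
      using elim(1) by linarith
  qed
  show ?thesis
  proof (rule order_tendstoI)
    fix b' assume "b < b'"
    have "eventually (\<lambda>P. - (ln (f P) / ln P) \<le> b - ln c / ln P) at_top"
      using lower ln_pos f_pos eventually_gt_at_top[of 0]
    proof eventually_elim
      case (elim P)
      then have "ln c - b * ln P \<le> ln (f P)"
        using \<open>c > 0\<close> ln_le_cancel_iff[of "c * P powr (- b)" "f P"] by (simp add: ln_mult)
      then have "(ln c - b * ln P) / ln P \<le> ln (f P) / ln P"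
        by (rule divide_right_mono) (use elim(2) in simp)
      then show ?case
        using elim(2) by (simp add: diff_divide_distrib)
    qed
    then show "eventually (\<lambda>P. - (ln (f P) / ln P) < b') at_top"
      using order_tendstoD(2)[OF vanishing[of b "ln c"] \<open>b < b'\<close>] by eventually_elim simp
  next
    fix a' assume "a' < b"
    define a where "a = (a' + b) / 2"
    have "a' < a" "a < b"
      using \<open>a' < b\<close> by (simp_all add: a_def)
    obtain C where C: "eventually (\<lambda>P. f P \<le> C * P powr (- a)) at_top"
      using upper \<open>a < b\<close> by blast
    have "eventually (\<lambda>P. a - ln C / ln P \<le> - (ln (f P) / ln P)) at_top"
      using C ln_pos f_pos eventually_gt_at_top[of 0]
    proof eventually_elim
      case (elim P)
      then have "0 < C * P powr (- a)"
        by linarith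
      then have "0 < C"
        using elim(4) by (simp add: zero_less_mult_iff)
      then have "ln (f P) \<le> ln C - a * ln P"
        using elim ln_le_cancel_iff[of "f P" "C * P powr (- a)"] by (simp add: ln_mult)
      then have "ln (f P) / ln P \<le> (ln C - a * ln P) / ln P"
        by (rule divide_right_mono) (use elim(2) in simp)
      then show ?case
        using elim(2) by (simp add: diff_divide_distrib)
    qed
    then show "eventually (\<lambda>P. a' < - (ln (f P) / ln P)) at_top"
      using order_tendstoD(1)[OF vanishing[of a "ln C"] \<open>a' < a\<close>] by eventually_elim simp
  qed
qed

lemma outage_prob_lower:
  assumes RD: "RD > 0" and "R > 0"
  shows "\<exists>c>0. eventually (\<lambda>P. c * P powr (- real (N + 1)) \<le> outage_prob N RD d \<eta> R P) at_top"
proof -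
  define \<tau> where "\<tau> = 2 powr (2 * R) - 1"
  have \<tau>: "\<tau> > 0"
    using \<open>R > 0\<close> by (simp add: \<tau>_def)
  define c where "c = exp (- 1) * (\<tau> * (1 + d\<^sup>2)) * (exp (- 1) * \<tau>) ^ N"
  have "c > 0"
    using \<tau> by (simp add: c_def add_pos_nonneg)
  moreover have "eventually (\<lambda>P. c * P powr (- real (N + 1)) \<le> outage_prob N RD d \<eta> R P) at_top"
    using eventually_ge_at_top[of "\<tau> * (1 + d\<^sup>2)"] eventually_gt_at_top[of 0]
  proof eventually_elim
    case (elim P)
    have "P powr (- real (N + 1)) = 1 / P ^ (N + 1)"
      using elim(2) by (simp only: powr_minus_divide powr_realpow)
    then have "c * P powr (- real (N + 1)) = exp (- 1) * (\<tau> * (1 + d\<^sup>2) / P) * (exp (- 1) * (\<tau> / P)) ^ N"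
      unfolding c_def by (simp add: power_mult_distrib power_divide)
    also have "\<dots> \<le> outage_prob N RD d \<eta> R P"
      using measure_outage_event_ge[OF RD \<tau> elim(1)]
      by (simp add: outage_prob_eq_measure_outage_event \<tau>_def)
    finally show ?case .
  qed
  ultimately show ?thesis
    by blast
qed

lemma divide_le_mult_powr_neg:
  fixes a P \<theta> :: real
  assumes "P \<ge> 1" "\<theta> \<le> 1" "a \<ge> 0"
  shows "a / P \<le> a * P powr (- \<theta>)"
proof -
  have "P powr \<theta> \<le> P powr 1"
    using assms by (intro powr_mono) auto
  then have "1 / P \<le> P powr (- \<theta>)"
    using assms by (simp add: powr_minus_divide divide_le_eq_1 divide_le_eq)
  then show ?thesis
    using mult_left_mono[OF _ \<open>a \<ge> 0\<close>] by fastforce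
qed

lemma sum_divide_le_mult_powr_neg:
  fixes a c P \<theta> :: real and k :: nat
  assumes P: "P \<ge> 1" and \<theta>: "\<theta> \<le> 1" and "a \<ge> 0" "c \<ge> 0"
  shows "a / P + 2 * (c / P) + k * (c / P) powr \<theta> \<le> (a + 2 * c + k * c powr \<theta>) * P powr (- \<theta>)"
proof -
  have "a / P \<le> a * P powr (- \<theta>)" "c / P \<le> c * P powr (- \<theta>)"
    using assms by (simp_all add: divide_le_mult_powr_neg)
  moreover have "k * (c / P) powr \<theta> = k * (c powr \<theta> * P powr (- \<theta>))"
    using assms by (simp add: powr_divide powr_minus_divide)
  moreover have "(a + 2 * c + k * c powr \<theta>) * P powr (- \<theta>)
      = a * P powr (- \<theta>) + 2 * (c * P powr (- \<theta>)) + k * (c powr \<theta> * P powr (- \<theta>))"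
    by (simp add: algebra_simps)
  ultimately show ?thesis
    by linarith
qed

lemma outage_prob_upper:
  fixes k :: nat
  assumes RD: "RD > 0" and \<eta>: "\<eta> > 0" and "R > 0" and k: "k \<ge> 1"
  shows "\<exists>C>0. eventually (\<lambda>P. outage_prob N RD d \<eta> R P \<le> C * P powr (- (1 + N * (1 - 1 / k)))) at_top"
proof -
  define \<tau> where "\<tau> = 2 powr (2 * R) - 1"
  have \<tau>: "\<tau> > 0"
    using \<open>R > 0\<close> by (simp add: \<tau>_def)
  define \<theta> where "\<theta> = 1 - 1 / real k"
  define c where "c = 2 * (1 + RD\<^sup>2) * (1 + d\<^sup>2) * \<tau> / \<eta>"
  define A where "A = 2 * (1 + RD\<^sup>2) * \<tau> + 2 * c + k * c powr \<theta>"
  define C where "C = \<tau> * (1 + d\<^sup>2) * A ^ N"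
  have "c > 0" "A > 0"
    using \<tau> \<eta> by (simp_all add: c_def A_def add_pos_nonneg)
  then have "C > 0"
    using \<tau> by (simp add: C_def add_pos_nonneg)
  moreover have "eventually (\<lambda>P. outage_prob N RD d \<eta> R P \<le> C * P powr (- (1 + N * \<theta>))) at_top"
    using eventually_ge_at_top[of "max 1 c"]
  proof eventually_elim
    case (elim P)
    then have P: "P \<ge> 1" "c / P \<le> 1"
      using \<open>c > 0\<close> by simp_all
    have u: "2 * (1 + RD\<^sup>2) * (1 + d\<^sup>2) * \<tau> / (\<eta> * P) = c / P"
      by (simp add: c_def)
    from measure_outage_event_le[OF RD \<tau> \<eta> _ k, where N = N and d = d and P = P, unfolded u, OF _ P(2)]
    have "outage_prob N RD d \<eta> R P \<le> \<tau> * (1 + d\<^sup>2) / P * (2 * (1 + RD\<^sup>2) * \<tau> / P + 2 * (c / P) + k * (c / P) powr \<theta>) ^ N"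
      using P unfolding outage_prob_eq_measure_outage_event \<tau>_def[symmetric] \<theta>_def by simp
    also have "\<dots> \<le> \<tau> * (1 + d\<^sup>2) / P * (A * P powr (- \<theta>)) ^ N"
      unfolding A_def using \<tau> P \<open>c > 0\<close>
      by (intro mult_left_mono power_mono sum_divide_le_mult_powr_neg) (auto simp: \<theta>_def add_pos_nonneg)
    also have "\<dots> = C * P powr (- (1 + N * \<theta>))"
      using P by (simp add: C_def power_divide powr_power powr_diff powr_minus_divide)
    finally show ?case .
  qed
  ultimately show ?thesis
    unfolding \<theta>_def by blast
qed

lemma outage_prob_upper_exponent:
  assumes "RD > 0" "\<eta> > 0" "R > 0" and a: "a < real (N + 1)"
  shows "\<exists>C. eventually (\<lambda>P. outage_prob N RD d \<eta> R P \<le> C * P powr (- a)) at_top"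
proof -
  define k where "k = nat \<lceil>N / (real (N + 1) - a)\<rceil> + 1"
  have "k \<ge> 1" "N / (real (N + 1) - a) < k"
    unfolding k_def by linarith+
  then have "a \<le> 1 + N * (1 - 1 / k)"
    using a by (simp add: field_simps)
  obtain C where "C > 0"
    and bound: "eventually (\<lambda>P. outage_prob N RD d \<eta> R P \<le> C * P powr (- (1 + N * (1 - 1 / k)))) at_top"
    using outage_prob_upper[OF assms(1-3) \<open>k \<ge> 1\<close>] by blast
  have "eventually (\<lambda>P. outage_prob N RD d \<eta> R P \<le> C * P powr (- a)) at_top"
    using bound eventually_ge_at_top[of 1]
  proof eventually_elim
    case (elim P)
    have "C * P powr (- (1 + N * (1 - 1 / k))) \<le> C * P powr (- a)"
      using elim(2) \<open>a \<le> 1 + N * (1 - 1 / k)\<close> \<open>C > 0\<close> by (intro mult_left_mono powr_mono) auto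
    then show ?case
      using elim(1) by linarith
  qed
  then show ?thesis ..
qed

theorem theorem3:
  fixes N :: nat and RD d \<eta> R :: real
  assumes "N \<ge> 1" and "RD > 0" and "d > 0" and "\<eta> > 0" and "\<eta> \<le> 1" and "R > 0"
  shows "((\<lambda>P. - (ln (outage_prob N RD d \<eta> R P) / ln P)) \<longlongrightarrow> real (N + 1)) at_top"
proof -
  obtain c where "c > 0"
    and lower: "eventually (\<lambda>P. c * P powr (- real (N + 1)) \<le> outage_prob N RD d \<eta> R P) at_top"
    using outage_prob_lower[OF \<open>RD > 0\<close> \<open>R > 0\<close>] by blast
  show ?thesis
    using outage_prob_upper_exponent[OF \<open>RD > 0\<close> \<open>\<eta> > 0\<close> \<open>R > 0\<close>]
    by (rule tendsto_neg_ln_div_ln_at_top[OF \<open>c > 0\<close> lower])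
qed

end
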